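(* Let $G$ and $H$ be two nontrivial connected graphs and let $S\subseteq V(G)$ and $T\subseteq V(H)$ be cycle convex sets in $G$ and $H$ respectively. Then $S\times T$ is cycle convex in $G\Box H$.
   Context: All graphs are finite, simple and undirected. For a graph $G$ and $S\subseteq V(G)$, the cycle interval $\langle S\rangle$ consists of the vertices of $S$ together with every vertex $w\in V(G)\setminus S$ such that $G[S\cup\{w\}]$ contains a cycle through $w$; $S$ is cycle convex if $\langle S\rangle=S$. The Cartesian product $G\Box H$ has vertex set $V(G)\times V(H)$, with $(g_1,h_1)\sim(g_2,h_2)$ iff ($g_1\sim g_2$ and $h_1=h_2$) or ($g_1=g_2$ and $h_1\sim h_2$). A graph is nontrivial if it has at least two vertices. *)

theory Defs
  imports Main
begin

definition simple_graph :: "'a set \<Rightarrow> ('a \<Rightarrow> 'a \<Rightarrow> bool) \<Rightarrow> bool" where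
  "simple_graph V E \<longleftrightarrow> finite V \<and> (\<forall>x y. E x y \<longrightarrow> x \<in> V \<and> y \<in> V)
     \<and> (\<forall>x y. E x y \<longrightarrow> E y x) \<and> (\<forall>x. \<not> E x x)"

definition connected_graph :: "'a set \<Rightarrow> ('a \<Rightarrow> 'a \<Rightarrow> bool) \<Rightarrow> bool" where
  "connected_graph V E \<longleftrightarrow> (\<forall>x\<in>V. \<forall>y\<in>V. E\<^sup>*\<^sup>* x y)"

definition nontrivial_graph :: "'a set \<Rightarrow> bool" where
  "nontrivial_graph V \<longleftrightarrow> (\<exists>x\<in>V. \<exists>y\<in>V. x \<noteq> y)"

definition cycle_in :: "('a \<Rightarrow> 'a \<Rightarrow> bool) \<Rightarrow> 'a set \<Rightarrow> 'a list \<Rightarrow> bool" where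
  "cycle_in E A xs \<longleftrightarrow> distinct xs \<and> length xs \<ge> 3 \<and> set xs \<subseteq> A
     \<and> (\<forall>i < length xs. E (xs ! i) (xs ! ((i + 1) mod length xs)))"

definition cycle_interval :: "'a set \<Rightarrow> ('a \<Rightarrow> 'a \<Rightarrow> bool) \<Rightarrow> 'a set \<Rightarrow> 'a set" where
  "cycle_interval V E S = S \<union> {w \<in> V - S. \<exists>xs. cycle_in E (S \<union> {w}) xs \<and> w \<in> set xs}"

definition cycle_convex :: "'a set \<Rightarrow> ('a \<Rightarrow> 'a \<Rightarrow> bool) \<Rightarrow> 'a set \<Rightarrow> bool" where
  "cycle_convex V E S \<longleftrightarrow> cycle_interval V E S = S"

definition box_vertices :: "'a set \<Rightarrow> 'b set \<Rightarrow> ('a \<times> 'b) set" where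
  "box_vertices V W = V \<times> W"

definition box_edge :: "('a \<Rightarrow> 'a \<Rightarrow> bool) \<Rightarrow> ('b \<Rightarrow> 'b \<Rightarrow> bool) \<Rightarrow> 'a \<times> 'b \<Rightarrow> 'a \<times> 'b \<Rightarrow> bool" where
  "box_edge E F p q \<longleftrightarrow> (E (fst p) (fst q) \<and> snd p = snd q) \<or> (fst p = fst q \<and> F (snd p) (snd q))"

end

theory Submission
  imports Defs "HOL-Library.Transitive_Closure_Table"
begin

text \<open>Suppose \<open>w = (g, h) \<notin> S \<times> T\<close> lies on a cycle of \<open>G \<box> H\<close> whose other vertices lie in
\<open>S \<times> T\<close>; by symmetry \<open>g \<notin> S\<close>. The two cycle neighbours of \<open>w\<close> have first coordinate in \<open>S\<close>,
so they are \<open>G\<close>-neighbours \<open>(a, h)\<close> and \<open>(b, h)\<close> with \<open>a \<noteq> b\<close>. Projecting the rest of the cycle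
to \<open>G\<close> gives a walk from \<open>a\<close> to \<open>b\<close> inside \<open>G[S]\<close>; a shortest such path closed up through \<open>g\<close>
is a cycle of \<open>G[S \<union> {g}]\<close>, contradicting the cycle convexity of \<open>S\<close>.\<close>

definition induced_edge :: "('a \<Rightarrow> 'a \<Rightarrow> bool) \<Rightarrow> 'a set \<Rightarrow> 'a \<Rightarrow> 'a \<Rightarrow> bool" where
  "induced_edge E S x y \<longleftrightarrow> E x y \<and> x \<in> S \<and> y \<in> S"

lemma cycle_in_iff_successively:
  "cycle_in E A xs \<longleftrightarrow> distinct xs \<and> 3 \<le> length xs \<and> set xs \<subseteq> A
     \<and> successively E xs \<and> E (last xs) (hd xs)"
proof (cases "xs = []")
  case False
  then obtain m where m: "length xs = Suc m"
    by (cases xs) auto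
  then have "(\<forall>i < length xs. E (xs ! i) (xs ! ((i + 1) mod length xs)))
      \<longleftrightarrow> successively E xs \<and> E (last xs) (hd xs)"
    using False by (simp add: All_less_Suc successively_conv_nth last_conv_nth hd_conv_nth conj_commute)
  then show ?thesis
    unfolding cycle_in_def by blast
qed (simp add: cycle_in_def)

lemma cycle_in_rotate1:
  assumes "cycle_in E A xs"
  shows "cycle_in E A (rotate1 xs)"
proof (cases xs)
  case (Cons x ys)
  with assms have "ys \<noteq> []"
    by (auto simp: cycle_in_def)
  with assms Cons show ?thesis
    by (auto simp: cycle_in_iff_successively successively_Cons successively_append_iff hd_append)
qed (use assms in \<open>simp add: cycle_in_def\<close>)

lemma cycle_in_rotate: "cycle_in E A xs \<Longrightarrow> cycle_in E A (rotate k xs)"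
  by (induction k) (simp_all add: cycle_in_rotate1)

lemma cycle_in_startE:
  assumes "cycle_in E A xs" and "w \<in> set xs"
  obtains zs where "cycle_in E A (w # zs)"
proof -
  obtain ys zs where "xs = ys @ w # zs"
    using split_list[OF assms(2)] by blast
  then have "rotate (length ys) xs = w # zs @ ys"
    by (simp add: rotate_append)
  then show thesis
    using that cycle_in_rotate[OF assms(1)] by metis
qed

lemma cycle_in_map:
  assumes "cycle_in E A xs" and "inj f" and "\<And>x y. E x y \<Longrightarrow> F (f x) (f y)"
  shows "cycle_in F (f ` A) (map f xs)"
proof -
  have "xs \<noteq> []"
    using assms(1) by (auto simp: cycle_in_def)
  then show ?thesis
    using assms
    by (auto simp: cycle_in_iff_successively distinct_map inj_on_subset successively_map
        last_map hd_map elim!: successively_mono)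
qed

lemma cycle_in_box_swap:
  assumes "cycle_in (box_edge E F) A xs"
  shows "cycle_in (box_edge F E) (prod.swap ` A) (map prod.swap xs)"
  using assms by (rule cycle_in_map) (auto simp: box_edge_def)

lemma rtrancl_path_successively:
  "rtrancl_path r x xs y \<Longrightarrow> successively r (x # xs) \<and> last (x # xs) = y"
  by (induction rule: rtrancl_path.induct) (auto simp: successively_Cons)

lemma closed_path_in_cycle_interval:
  assumes "g \<in> V" and "g \<notin> S" and "a \<noteq> b" and "E g a" and "E b g"
    and "(induced_edge E S)\<^sup>*\<^sup>* a b"
  shows "g \<in> cycle_interval V E S"
proof -
  obtain p where p: "rtrancl_path (induced_edge E S) a p b" "distinct (a # p)"
    using assms(6) rtrancl_path_distinct unfolding rtranclp_eq_rtrancl_path by metis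
  obtain c p' where "p = c # p'"
    using p(1) \<open>a \<noteq> b\<close> by (cases rule: rtrancl_path.cases) auto
  with p(1) have "a \<in> S"
    by (auto simp: induced_edge_def elim: rtrancl_path.cases)
  have "set p \<subseteq> S"
    using p(1) by induction (auto simp: induced_edge_def)
  have "successively (induced_edge E S) (a # p)" and "last (a # p) = b"
    using rtrancl_path_successively[OF p(1)] by auto
  then have "cycle_in E (S \<union> {g}) (g # a # p)"
    using p(2) \<open>p = c # p'\<close> \<open>a \<in> S\<close> \<open>set p \<subseteq> S\<close> assms(2,4,5)
    by (auto simp: cycle_in_iff_successively induced_edge_def elim: successively_mono)
  then show ?thesis
    using assms(1,2) by (auto simp: cycle_interval_def)
qed

lemma successively_reflclp_rtranclp:
  "successively (\<lambda>x y. R x y \<or> x = y) xs \<Longrightarrow> xs \<noteq> [] \<Longrightarrow> R\<^sup>*\<^sup>* (hd xs) (last xs)"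
  by (induction "\<lambda>x y. R x y \<or> x = y" xs rule: successively.induct)
    (auto intro: converse_rtranclp_into_rtranclp)

lemma box_walk_fst:
  assumes "successively (box_edge EG EH) p" and "set p \<subseteq> S \<times> T" and "p \<noteq> []"
  shows "(induced_edge EG S)\<^sup>*\<^sup>* (fst (hd p)) (fst (last p))"
proof -
  have "successively (\<lambda>x y. induced_edge EG S x y \<or> x = y) (map fst p)"
    unfolding successively_map using assms(1)
    by (rule successively_mono) (use assms(2) in \<open>auto simp: box_edge_def induced_edge_def\<close>)
  then show ?thesis
    using successively_reflclp_rtranclp assms(3) by (fastforce simp: hd_map last_map)
qed

lemma box_cycle_fst_in_cycle_interval:
  assumes "fst w \<in> VG" and "fst w \<notin> S"
    and "cycle_in (box_edge EG EH) (S \<times> T \<union> {w}) xs" and "w \<in> set xs"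
  shows "fst w \<in> cycle_interval VG EG S"
proof -
  obtain zs where "cycle_in (box_edge EG EH) (S \<times> T \<union> {w}) (w # zs)"
    using cycle_in_startE[OF assms(3,4)] .
  then obtain a zs' where zs: "zs = a # zs'" "zs' \<noteq> []" "distinct (w # a # zs')"
    and "set zs \<subseteq> S \<times> T" and walk: "successively (box_edge EG EH) zs"
    and wa: "box_edge EG EH w a" and bw: "box_edge EG EH (last zs') w"
    using \<open>fst w \<notin> S\<close>
    by (cases zs; cases "tl zs") (auto simp: cycle_in_iff_successively successively_Cons)
  define b where "b = last zs'"
  have "b \<in> set zs'" and "a \<notin> set zs'"
    using zs(2,3) by (simp_all add: b_def)
  then have "a \<in> S \<times> T" and "b \<in> S \<times> T" and "a \<noteq> b"
    using \<open>set zs \<subseteq> S \<times> T\<close> zs(1) by auto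
  then have ga: "EG (fst w) (fst a)" "snd a = snd w" and bg: "EG (fst b) (fst w)" "snd b = snd w"
    using wa bw[folded b_def] \<open>fst w \<notin> S\<close> by (auto simp: box_edge_def)
  then have "fst a \<noteq> fst b"
    using \<open>a \<noteq> b\<close> by (auto simp: prod_eq_iff)
  moreover have "(induced_edge EG S)\<^sup>*\<^sup>* (fst a) (fst b)"
    using box_walk_fst[OF walk \<open>set zs \<subseteq> S \<times> T\<close>] zs by (simp add: b_def)
  ultimately show ?thesis
    by (rule closed_path_in_cycle_interval[OF assms(1,2) _ ga(1) bg(1)])
qed

lemma box_cycle_snd_in_cycle_interval:
  assumes "snd w \<in> VH" and "snd w \<notin> T"
    and "cycle_in (box_edge EG EH) (S \<times> T \<union> {w}) xs" and "w \<in> set xs"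
  shows "snd w \<in> cycle_interval VH EH T"
proof -
  have swapped: "cycle_in (box_edge EH EG) (T \<times> S \<union> {prod.swap w}) (map prod.swap xs)"
    using cycle_in_box_swap[OF assms(3)] by (simp add: image_Un product_swap)
  show ?thesis
    using box_cycle_fst_in_cycle_interval[OF _ _ swapped, of VH] assms(1,2,4) by simp
qed

lemma cycle_convex_iff:
  "cycle_convex V E S \<longleftrightarrow> (\<forall>w \<in> V - S. \<forall>xs. cycle_in E (S \<union> {w}) xs \<longrightarrow> w \<notin> set xs)"
  unfolding cycle_convex_def cycle_interval_def by auto

theorem mainTheorem4:
  fixes VG :: "'a set" and EG :: "'a \<Rightarrow> 'a \<Rightarrow> bool"
    and VH :: "'b set" and EH :: "'b \<Rightarrow> 'b \<Rightarrow> bool"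
    and S :: "'a set" and T :: "'b set"
  assumes "simple_graph VG EG" and "simple_graph VH EH"
    and "connected_graph VG EG" and "connected_graph VH EH"
    and "nontrivial_graph VG" and "nontrivial_graph VH"
    and "S \<subseteq> VG" and "T \<subseteq> VH"
    and "cycle_convex VG EG S" and "cycle_convex VH EH T"
  shows "cycle_convex (box_vertices VG VH) (box_edge EG EH) (S \<times> T)"
  unfolding cycle_convex_iff box_vertices_def
proof (intro ballI allI impI notI)
  fix w xs
  assume w: "w \<in> VG \<times> VH - S \<times> T"
    and cyc: "cycle_in (box_edge EG EH) (S \<times> T \<union> {w}) xs" and "w \<in> set xs"
  from w consider "fst w \<in> VG - S" | "snd w \<in> VH - T"
    by (auto simp: mem_Times_iff)
  then show False
  proof cases
    case 1
    then have "fst w \<in> cycle_interval VG EG S"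
      using box_cycle_fst_in_cycle_interval cyc \<open>w \<in> set xs\<close> by blast
    with 1 \<open>cycle_convex VG EG S\<close> show False
      by (simp add: cycle_convex_def)
  next
    case 2
    then have "snd w \<in> cycle_interval VH EH T"
      using box_cycle_snd_in_cycle_interval cyc \<open>w \<in> set xs\<close> by blast
    with 2 \<open>cycle_convex VH EH T\<close> show False
      by (simp add: cycle_convex_def)
  qed
qed

end
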